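(* In the setting below, for every such model one has $\operatorname{corr}(X_i,Y_j)\in[-\beta,\beta]$ for all $i,j$. Moreover $\operatorname{corr}(X_i,Y_j)=\beta$ (respectively $=-\beta$) if and only if $\bar W_k=\bar J_k$ almost surely for every $k$ and $\rho_0=1$ (respectively $\rho_0=-1$).
   Context: Setting: $G_0$ is a probability measure on $\mathbb{R}^2$ whose two marginals both equal a probability measure $P_0$ on $\mathbb{R}$ with finite, strictly positive variance; $\rho_0$ is the correlation of the two coordinates under $G_0$. Let $(\theta_k,\phi_k)\overset{iid}{\sim}G_0$, independent of nonnegative random weights $(\bar J_k)_{k\ge1},(\bar W_k)_{k\ge1}$ with $\sum_k\bar J_k=\sum_k\bar W_k=1$ a.s. and $\bar J_k$, $\bar W_k$ equal in distribution for each $k$ (so $\tilde p_1$ and $\tilde p_2$ below have the same marginal law, which is regarded as fixed). Set $\tilde p_1=\sum_k\bar J_k\delta_{\theta_k}$, $\tilde p_2=\sum_k\bar W_k\delta_{\phi_k}$; conditionally on $(\tilde p_1,\tilde p_2)$ the $X_i$, $Y_j$ are independent with $X_i\sim\tilde p_1$, $Y_j\sim\tilde p_2$. Let $\beta:=\sum_k\mathbb{E}(\bar J_k^2)$. *)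

theory Defs
  imports "HOL-Probability.Probability"
begin

definition correlation :: "'a measure \<Rightarrow> ('a \<Rightarrow> real) \<Rightarrow> ('a \<Rightarrow> real) \<Rightarrow> real" where
  "correlation M X Y =
     (\<integral>\<omega>. (X \<omega> - (\<integral>x. X x \<partial>M)) * (Y \<omega> - (\<integral>x. Y x \<partial>M)) \<partial>M)
     / sqrt ((\<integral>\<omega>. (X \<omega> - (\<integral>x. X x \<partial>M))\<^sup>2 \<partial>M) * (\<integral>\<omega>. (Y \<omega> - (\<integral>x. Y x \<partial>M))\<^sup>2 \<partial>M))"

definition rand_meas :: "(nat \<Rightarrow> real) \<Rightarrow> (nat \<Rightarrow> real) \<Rightarrow> real set \<Rightarrow> real" where
  "rand_meas w a B = (\<Sum>k. w k * indicator B (a k))"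

end

theory Submission
  imports Defs
begin

text \<open>
  Conditionally on the weights and atoms, \<open>X\<close> picks the atom index \<open>k\<close> with probability \<open>J\<^sub>k\<close> and \<open>Y\<close>
  independently picks \<open>l\<close> with probability \<open>W\<^sub>l\<close>. If \<open>k = l\<close>, then \<open>(X, Y) = (\<theta>\<^sub>k, \<phi>\<^sub>k)\<close> has law \<open>G\<^sub>0\<close>;
  otherwise \<open>\<theta>\<^sub>k\<close> and \<open>\<phi>\<^sub>l\<close> are independent with law \<open>P\<^sub>0\<close> each. Since the weights are independent of the
  atoms, \<open>E[f(X) g(Y)] = (1 - \<pi>) P\<^sub>0 f P\<^sub>0 g + \<pi> G\<^sub>0 (f \<otimes> g)\<close> with \<open>\<pi> = \<Sum>\<^sub>k E[J\<^sub>k W\<^sub>k]\<close>, the probability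
  of hitting the same atom. Hence \<open>X\<close> and \<open>Y\<close> have marginal \<open>P\<^sub>0\<close> and \<open>corr(X, Y) = \<pi> \<rho>\<^sub>0\<close>.
  As \<open>J\<^sub>k\<close> and \<open>W\<^sub>k\<close> have the same law, \<open>E[J\<^sub>k W\<^sub>k] \<le> E[J\<^sub>k\<^sup>2]\<close> with equality iff \<open>J\<^sub>k = W\<^sub>k\<close> a.s., so
  \<open>\<pi> \<le> \<beta>\<close> with equality iff all weights agree, and \<open>|\<rho>\<^sub>0| \<le> 1\<close> gives the claim.
\<close>

lemma ennreal_suminf_SUP_mult:
  fixes w :: "nat \<Rightarrow> ennreal" and U :: "nat \<Rightarrow> 'b \<Rightarrow> ennreal"
  assumes "incseq U"
  shows "(\<Sum>l. w l * (SUP i. U i) (x l)) = (SUP i. \<Sum>l. w l * U i (x l))"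
proof -
  have "(\<Sum>l. w l * (SUP i. U i) (x l)) = (\<Sum>l. SUP i. w l * U i (x l))"
    by (simp add: SUP_apply SUP_mult_left_ennreal image_comp)
  also have "\<dots> = (SUP i. \<Sum>l. w l * U i (x l))"
    using assms by (intro ennreal_suminf_SUP_eq) (auto simp: incseq_def le_fun_def intro!: mult_left_mono)
  finally show ?thesis .
qed

lemma nn_integral_mixture_eq_of_indicators:
  fixes a b :: "'a \<Rightarrow> ennreal" and Z :: "'a \<Rightarrow> real" and w :: "nat \<Rightarrow> 'a \<Rightarrow> ennreal"
    and \<psi> :: "nat \<Rightarrow> 'a \<Rightarrow> real" and g :: "real \<Rightarrow> ennreal"
  assumes [measurable]: "a \<in> borel_measurable M" "b \<in> borel_measurable M" "Z \<in> borel_measurable M"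
      "\<And>l. w l \<in> borel_measurable M" "\<And>l. \<psi> l \<in> borel_measurable M"
    and indicators: "\<And>C. C \<in> sets borel \<Longrightarrow> (\<integral>\<^sup>+\<omega>. a \<omega> * indicator C (Z \<omega>) \<partial>M)
        = (\<integral>\<^sup>+\<omega>. b \<omega> * (\<Sum>l. w l \<omega> * indicator C (\<psi> l \<omega>)) \<partial>M)"
    and g: "g \<in> borel_measurable borel"
  shows "(\<integral>\<^sup>+\<omega>. a \<omega> * g (Z \<omega>) \<partial>M) = (\<integral>\<^sup>+\<omega>. b \<omega> * (\<Sum>l. w l \<omega> * g (\<psi> l \<omega>)) \<partial>M)"
  using g
proof (induction g rule: borel_measurable_induct)
  case (cong f g)
  then have "f = g" by auto
  with cong show ?case by simp
next
  case (set A)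
  then show ?case using indicators by simp
next
  case (mult u c)
  note [measurable] = mult(2)
  have "(\<integral>\<^sup>+\<omega>. a \<omega> * (c * u (Z \<omega>)) \<partial>M) = (\<integral>\<^sup>+\<omega>. c * (a \<omega> * u (Z \<omega>)) \<partial>M)"
    by (simp add: ac_simps)
  also have "\<dots> = c * (\<integral>\<^sup>+\<omega>. a \<omega> * u (Z \<omega>) \<partial>M)"
    by (rule nn_integral_cmult) measurable
  also have "\<dots> = c * (\<integral>\<^sup>+\<omega>. b \<omega> * (\<Sum>l. w l \<omega> * u (\<psi> l \<omega>)) \<partial>M)"
    using mult by simp
  also have "\<dots> = (\<integral>\<^sup>+\<omega>. c * (b \<omega> * (\<Sum>l. w l \<omega> * u (\<psi> l \<omega>))) \<partial>M)"
    by (rule nn_integral_cmult[symmetric]) measurable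
  also have "\<dots> = (\<integral>\<^sup>+\<omega>. b \<omega> * (\<Sum>l. w l \<omega> * (c * u (\<psi> l \<omega>))) \<partial>M)"
  proof (rule nn_integral_cong)
    fix \<omega>
    have "(\<Sum>l. w l \<omega> * (c * u (\<psi> l \<omega>))) = (\<Sum>l. c * (w l \<omega> * u (\<psi> l \<omega>)))"
      by (simp only: mult.left_commute)
    also have "\<dots> = c * (\<Sum>l. w l \<omega> * u (\<psi> l \<omega>))"
      by (rule ennreal_suminf_cmult)
    finally show "c * (b \<omega> * (\<Sum>l. w l \<omega> * u (\<psi> l \<omega>))) = b \<omega> * (\<Sum>l. w l \<omega> * (c * u (\<psi> l \<omega>)))"
      by (simp only: mult.left_commute)
  qed
  finally show ?case .
next
  case (add u v)
  have [measurable]: "u \<in> borel_measurable borel" "v \<in> borel_measurable borel" using add by auto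
  have "(\<integral>\<^sup>+\<omega>. a \<omega> * (v (Z \<omega>) + u (Z \<omega>)) \<partial>M)
      = (\<integral>\<^sup>+\<omega>. a \<omega> * v (Z \<omega>) + a \<omega> * u (Z \<omega>) \<partial>M)"
    by (simp add: distrib_left)
  also have "\<dots> = (\<integral>\<^sup>+\<omega>. a \<omega> * v (Z \<omega>) \<partial>M) + (\<integral>\<^sup>+\<omega>. a \<omega> * u (Z \<omega>) \<partial>M)"
    by (rule nn_integral_add) measurable
  also have "\<dots> = (\<integral>\<^sup>+\<omega>. b \<omega> * (\<Sum>l. w l \<omega> * v (\<psi> l \<omega>)) \<partial>M)
     + (\<integral>\<^sup>+\<omega>. b \<omega> * (\<Sum>l. w l \<omega> * u (\<psi> l \<omega>)) \<partial>M)"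
    using add by simp
  also have "\<dots> = (\<integral>\<^sup>+\<omega>. b \<omega> * (\<Sum>l. w l \<omega> * v (\<psi> l \<omega>)) + b \<omega> * (\<Sum>l. w l \<omega> * u (\<psi> l \<omega>)) \<partial>M)"
    by (rule nn_integral_add[symmetric]) measurable
  also have "\<dots> = (\<integral>\<^sup>+\<omega>. b \<omega> * (\<Sum>l. w l \<omega> * (v (\<psi> l \<omega>) + u (\<psi> l \<omega>))) \<partial>M)"
    by (simp add: distrib_left[symmetric] suminf_add del: distrib_left)
  finally show ?case by simp
next
  case (seq U)
  note [measurable] = seq(1)
  have inc: "incseq U"
    using seq by blast
  then have mono: "m \<le> n \<Longrightarrow> U m y \<le> U n y" for m n y
    by (auto simp: incseq_def le_fun_def)
  have "(\<integral>\<^sup>+\<omega>. a \<omega> * (SUP i. U i) (Z \<omega>) \<partial>M) = (SUP i. \<integral>\<^sup>+\<omega>. a \<omega> * U i (Z \<omega>) \<partial>M)"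
    by (simp add: SUP_apply SUP_mult_left_ennreal image_comp nn_integral_monotone_convergence_SUP
        incseq_def le_fun_def mult_left_mono mono)
  moreover have "(\<integral>\<^sup>+\<omega>. b \<omega> * (\<Sum>l. w l \<omega> * (SUP i. U i) (\<psi> l \<omega>)) \<partial>M)
      = (SUP i. \<integral>\<^sup>+\<omega>. b \<omega> * (\<Sum>l. w l \<omega> * U i (\<psi> l \<omega>)) \<partial>M)"
    unfolding ennreal_suminf_SUP_mult[OF inc]
    by (simp add: SUP_mult_left_ennreal nn_integral_monotone_convergence_SUP
        incseq_def le_fun_def mult_left_mono suminf_le mono)
  ultimately show ?case
    using seq by simp
qed

lemma (in prob_space) indep_var_nn_integral:
  fixes X1 X2 :: "'a \<Rightarrow> ennreal"
  assumes "indep_var borel X1 borel X2"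
  shows "(\<integral>\<^sup>+\<omega>. X1 \<omega> * X2 \<omega> \<partial>M) = (\<integral>\<^sup>+\<omega>. X1 \<omega> \<partial>M) * (\<integral>\<^sup>+\<omega>. X2 \<omega> \<partial>M)"
proof -
  have borel_eq: "(\<lambda>_. borel) = case_bool borel borel"
    by (auto simp: fun_eq_iff split: bool.split)
  have "indep_vars (\<lambda>_. borel) (case_bool X1 X2) UNIV"
    using assms unfolding indep_var_def borel_eq .
  from indep_vars_nn_integral[OF _ this] show ?thesis
    by (simp add: UNIV_bool mult.commute)
qed

lemma ennreal_suminf_diagonal_split:
  fixes q :: "nat \<Rightarrow> nat \<Rightarrow> ennreal" and c d :: ennreal
  shows "(\<Sum>k. \<Sum>l. q k l * (if k = l then d else c)) + (\<Sum>k. q k k) * c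
       = (\<Sum>k. \<Sum>l. q k l) * c + (\<Sum>k. q k k) * d"
proof -
  have single: "\<And>k (h :: nat \<Rightarrow> ennreal). (\<Sum>l. if l = k then h l else 0) = h k"
    by (rule sums_unique[symmetric]) (rule sums_single)
  have inner: "(\<Sum>l. q k l * (if k = l then d else c)) + q k k * c = (\<Sum>l. q k l) * c + q k k * d" for k
  proof -
    have "(\<Sum>l. q k l * (if k = l then d else c)) + q k k * c
        = (\<Sum>l. q k l * (if k = l then d else c)) + (\<Sum>l. if l = k then q k l * c else 0)"
      using single[of k "\<lambda>l. q k l * c"] by simp
    also have "\<dots> = (\<Sum>l. q k l * (if k = l then d else c) + (if l = k then q k l * c else 0))"
      by (rule suminf_add) auto
    also have "\<dots> = (\<Sum>l. q k l * c + (if l = k then q k l * d else 0))"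
      by (intro suminf_cong) (auto simp: add.commute)
    also have "\<dots> = (\<Sum>l. q k l * c) + (\<Sum>l. if l = k then q k l * d else 0)"
      by (rule suminf_add[symmetric]) auto
    also have "\<dots> = (\<Sum>l. q k l) * c + q k k * d"
      using single[of k "\<lambda>l. q k l * d"] by simp
    finally show ?thesis .
  qed
  have "(\<Sum>k. \<Sum>l. q k l * (if k = l then d else c)) + (\<Sum>k. q k k) * c
      = (\<Sum>k. (\<Sum>l. q k l * (if k = l then d else c)) + q k k * c)"
  proof -
    have e: "(\<Sum>k. q k k) * c = (\<Sum>k. q k k * c)" by (rule ennreal_suminf_multc[symmetric])
    show ?thesis unfolding e by (intro suminf_add) auto
  qed
  also have "\<dots> = (\<Sum>k. (\<Sum>l. q k l) * c + q k k * d)"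
    using inner by simp
  also have "\<dots> = (\<Sum>k. (\<Sum>l. q k l) * c) + (\<Sum>k. q k k * d)"
    by (rule suminf_add[symmetric]) auto
  also have "\<dots> = (\<Sum>k. \<Sum>l. q k l) * c + (\<Sum>k. q k k) * d"
    by simp
  finally show ?thesis .
qed

lemma nonneg_sums_one_le_one:
  fixes w :: "nat \<Rightarrow> real"
  assumes "\<forall>k. 0 \<le> w k" "w sums 1"
  shows "w k \<le> 1"
  using sum_le_suminf[of w "{k}"] assms by (auto simp: sums_iff)

lemma
  fixes w a :: "nat \<Rightarrow> real"
  assumes "\<forall>k. 0 \<le> w k" "w sums 1"
  shows rand_meas_nonneg: "0 \<le> rand_meas w a B"
    and rand_meas_le_one: "rand_meas w a B \<le> 1"
    and ennreal_rand_meas: "ennreal (rand_meas w a B) = (\<Sum>k. ennreal (w k) * indicator B (a k))"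
proof -
  have sw: "summable w" using assms(2) by (auto simp: sums_iff)
  have s: "summable (\<lambda>k. w k * indicator B (a k))"
    by (rule summable_comparison_test'[OF sw, of 0]) (use assms in \<open>auto simp: indicator_def\<close>)
  have nn: "\<And>k. 0 \<le> w k * indicator B (a k)" using assms by auto
  show "0 \<le> rand_meas w a B" unfolding rand_meas_def using s nn by (simp add: suminf_nonneg)
  have "rand_meas w a B \<le> suminf w" unfolding rand_meas_def
    by (rule suminf_le[OF _ s sw]) (use assms in \<open>auto simp: indicator_def\<close>)
  then show "rand_meas w a B \<le> 1" using assms(2) by (simp add: sums_iff)
  have "ennreal (rand_meas w a B) = (\<Sum>k. ennreal (w k * indicator B (a k)))"
    unfolding rand_meas_def by (rule suminf_ennreal2[symmetric, OF nn s])
  also have "\<dots> = (\<Sum>k. ennreal (w k) * indicator B (a k))"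
    using assms(1) by (intro suminf_cong) (simp add: ennreal_mult ennreal_indicator)
  finally show "ennreal (rand_meas w a B) = (\<Sum>k. ennreal (w k) * indicator B (a k))" .
qed

lemma integral_eq_of_nn_integral_add:
  fixes f :: "'a \<Rightarrow> real"
  assumes [measurable]: "f \<in> borel_measurable M"
    and nonneg: "\<And>x. 0 \<le> f x" and "0 \<le> c" "0 \<le> e"
    and eq: "(\<integral>\<^sup>+x. ennreal (f x) \<partial>M) + ennreal c = ennreal e"
  shows "integrable M f" "(\<integral>x. f x \<partial>M) + c = e"
proof -
  have "(\<integral>\<^sup>+x. ennreal (f x) \<partial>M) \<le> ennreal e"
    using eq le_iff_add by metis
  also have "\<dots> < \<infinity>" by simp
  finally show int: "integrable M f"
    by (intro integrableI_nonneg) (auto simp: nonneg)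
  have "ennreal ((\<integral>x. f x \<partial>M) + c) = ennreal e"
    using eq nn_integral_eq_integral[OF int] nonneg \<open>0 \<le> c\<close>
    by (simp add: ennreal_plus integral_nonneg)
  then show "(\<integral>x. f x \<partial>M) + c = e"
    using \<open>0 \<le> c\<close> \<open>0 \<le> e\<close> nonneg by (subst (asm) ennreal_inj) (auto simp: integral_nonneg)
qed

lemma integral_square_diff:
  fixes U V :: "'a \<Rightarrow> real"
  assumes "integrable M (\<lambda>x. (U x)\<^sup>2)" "integrable M (\<lambda>x. (V x)\<^sup>2)" "integrable M (\<lambda>x. U x * V x)"
  shows "integrable M (\<lambda>x. (U x - V x)\<^sup>2)"
    "(\<integral>x. (U x - V x)\<^sup>2 \<partial>M) = (\<integral>x. (U x)\<^sup>2 \<partial>M) + (\<integral>x. (V x)\<^sup>2 \<partial>M) - 2 * (\<integral>x. U x * V x \<partial>M)"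
proof -
  have expand: "(\<lambda>x. (U x - V x)\<^sup>2) = (\<lambda>x. (U x)\<^sup>2 + (V x)\<^sup>2 - 2 * (U x * V x))"
    by (simp add: fun_eq_iff power2_diff mult.assoc)
  show "integrable M (\<lambda>x. (U x - V x)\<^sup>2)" unfolding expand using assms by simp
  show "(\<integral>x. (U x - V x)\<^sup>2 \<partial>M) = (\<integral>x. (U x)\<^sup>2 \<partial>M) + (\<integral>x. (V x)\<^sup>2 \<partial>M) - 2 * (\<integral>x. U x * V x \<partial>M)"
    unfolding expand using assms by simp
qed

lemma abs_integral_mult_le_mean_squares:
  fixes U V :: "'a \<Rightarrow> real"
  assumes "integrable M (\<lambda>x. (U x)\<^sup>2)" "integrable M (\<lambda>x. (V x)\<^sup>2)" "integrable M (\<lambda>x. U x * V x)"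
  shows "2 * \<bar>\<integral>x. U x * V x \<partial>M\<bar> \<le> (\<integral>x. (U x)\<^sup>2 \<partial>M) + (\<integral>x. (V x)\<^sup>2 \<partial>M)"
proof -
  have "0 \<le> (\<integral>x. (U x - V x)\<^sup>2 \<partial>M)" "0 \<le> (\<integral>x. (U x - - V x)\<^sup>2 \<partial>M)"
    by simp_all
  with integral_square_diff(2)[OF assms] integral_square_diff(2)[of M U "\<lambda>x. - V x"] assms
  show ?thesis by simp
qed

lemma integral_mult_le_square_of_eq_squares:
  fixes U V :: "'a \<Rightarrow> real"
  assumes "integrable M (\<lambda>x. (U x)\<^sup>2)" "integrable M (\<lambda>x. (V x)\<^sup>2)" "integrable M (\<lambda>x. U x * V x)"
    and same: "(\<integral>x. (V x)\<^sup>2 \<partial>M) = (\<integral>x. (U x)\<^sup>2 \<partial>M)"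
  shows "(\<integral>x. U x * V x \<partial>M) \<le> (\<integral>x. (U x)\<^sup>2 \<partial>M)"
    and "(\<integral>x. U x * V x \<partial>M) = (\<integral>x. (U x)\<^sup>2 \<partial>M) \<longleftrightarrow> (AE x in M. U x = V x)"
proof -
  note diff = integral_square_diff[OF assms(1-3)]
  have "0 \<le> (\<integral>x. (U x - V x)\<^sup>2 \<partial>M)" by simp
  then show "(\<integral>x. U x * V x \<partial>M) \<le> (\<integral>x. (U x)\<^sup>2 \<partial>M)" using diff(2) same by simp
  have "(\<integral>x. U x * V x \<partial>M) = (\<integral>x. (U x)\<^sup>2 \<partial>M) \<longleftrightarrow> (\<integral>x. (U x - V x)\<^sup>2 \<partial>M) = 0"
    using diff(2) same by auto
  also have "\<dots> \<longleftrightarrow> (AE x in M. U x = V x)"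
    by (simp add: integral_nonneg_eq_0_iff_AE[OF diff(1)])
  finally show "(\<integral>x. U x * V x \<partial>M) = (\<integral>x. (U x)\<^sup>2 \<partial>M) \<longleftrightarrow> (AE x in M. U x = V x)" .
qed

lemma suminf_eq_suminf_iff_of_le:
  fixes f g :: "nat \<Rightarrow> real"
  assumes "summable f" "summable g" "\<And>k. f k \<le> g k"
  shows "suminf f = suminf g \<longleftrightarrow> (\<forall>k. f k = g k)"
proof -
  have "(\<Sum>k. g k - f k) = suminf g - suminf f"
    by (rule suminf_diff[OF assms(2,1), symmetric])
  then have "suminf f = suminf g \<longleftrightarrow> (\<Sum>k. g k - f k) = 0"
    by auto
  also have "\<dots> \<longleftrightarrow> (\<forall>k. g k - f k = 0)"
    by (rule suminf_eq_zero_iff[OF summable_diff[OF assms(2,1)]]) (use assms(3) in simp)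
  finally show ?thesis by auto
qed

lemma correlation_eq_covariance_div:
  assumes "(\<integral>x. U x \<partial>M) = m" "(\<integral>x. V x \<partial>M) = m"
    and "(\<integral>x. (U x - m)\<^sup>2 \<partial>M) = s" "(\<integral>x. (V x - m)\<^sup>2 \<partial>M) = s" "0 < s"
  shows "correlation M U V = (\<integral>x. (U x - m) * (V x - m) \<partial>M) / s"
  using assms by (simp add: correlation_def)

lemma mult_in_interval_and_extremes:
  fixes p b r :: real
  assumes "0 \<le> p" "p \<le> b" "0 < b" "\<bar>r\<bar> \<le> 1"
  shows "p * r \<in> {-b..b} \<and> (p * r = b \<longleftrightarrow> p = b \<and> r = 1) \<and> (p * r = -b \<longleftrightarrow> p = b \<and> r = -1)"
proof -
  have "\<bar>p * r\<bar> \<le> p" using mult_left_mono[OF assms(4,1)] by (simp add: abs_mult assms(1))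
  moreover have "p * r = b \<Longrightarrow> r = 1" "p * r = -b \<Longrightarrow> r = -1" if "p = b"
    using that assms(3) by (metis less_irrefl mult.right_neutral mult_cancel_left mult_minus_right)+
  ultimately show ?thesis using assms(2,3) by (auto simp: abs_le_iff)
qed

lemma fst_borel_measurable[measurable]: "fst \<in> borel_measurable (borel :: (real \<times> real) measure)"
  using measurable_fst[of "borel::real measure" "borel::real measure"] by (simp add: borel_prod)

lemma snd_borel_measurable[measurable]: "snd \<in> borel_measurable (borel :: (real \<times> real) measure)"
  using measurable_snd[of "borel::real measure" "borel::real measure"] by (simp add: borel_prod)

locale same_marginals_coupling =
  fixes G0 :: "(real \<times> real) measure" and P0 :: "real measure"
  assumes prob_space_G0: "prob_space G0" and sets_G0: "sets G0 = sets borel"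
    and marg1: "distr G0 borel fst = P0" and marg2: "distr G0 borel snd = P0"
    and P0_sq: "integrable P0 (\<lambda>x. x\<^sup>2)"
    and P0_var: "(\<integral>x. (x - (\<integral>y. y \<partial>P0))\<^sup>2 \<partial>P0) > 0"
begin

definition mean0 :: real where "mean0 = (\<integral>x. x \<partial>P0)"
definition var0 :: real where "var0 = (\<integral>x. (x - mean0)\<^sup>2 \<partial>P0)"
definition cov0 :: real where "cov0 = (\<integral>z. (fst z - mean0) * (snd z - mean0) \<partial>G0)"

lemma var0_pos: "0 < var0"
  using P0_var unfolding var0_def mean0_def .

lemma measurable_G0_iff: "f \<in> measurable G0 N \<longleftrightarrow> f \<in> measurable borel N"
  by (simp add: measurable_cong_sets[OF sets_G0 refl])

lemma fst_G0_measurable[measurable]: "fst \<in> borel_measurable G0"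
  and snd_G0_measurable[measurable]: "snd \<in> borel_measurable G0"
  by (simp_all add: measurable_G0_iff)

lemma sets_P0[measurable_cong]: "sets P0 = sets borel"
  unfolding marg1[symmetric] by simp

sublocale G0: prob_space G0 by (rule prob_space_G0)

sublocale P0: prob_space P0
  unfolding marg1[symmetric] by (rule G0.prob_space_distr) measurable

lemma nn_integral_G0_fst: "(\<integral>\<^sup>+z. f (fst z) \<partial>G0) = (\<integral>\<^sup>+x. f x \<partial>P0)"
  if [measurable]: "f \<in> borel_measurable borel"
  unfolding marg1[symmetric] by (simp add: nn_integral_distr)

lemma nn_integral_G0_snd: "(\<integral>\<^sup>+z. f (snd z) \<partial>G0) = (\<integral>\<^sup>+x. f x \<partial>P0)"
  if [measurable]: "f \<in> borel_measurable borel"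
  unfolding marg2[symmetric] by (simp add: nn_integral_distr)

lemma
  fixes h :: "real \<Rightarrow> real"
  assumes [measurable]: "h \<in> borel_measurable borel" and "integrable P0 h"
  shows integrable_G0_fst: "integrable G0 (\<lambda>z. h (fst z))"
    and integral_G0_fst: "(\<integral>z. h (fst z) \<partial>G0) = (\<integral>x. h x \<partial>P0)"
  using assms(2) unfolding marg1[symmetric] by (simp_all add: integrable_distr_eq integral_distr)

lemma
  fixes h :: "real \<Rightarrow> real"
  assumes [measurable]: "h \<in> borel_measurable borel" and "integrable P0 h"
  shows integrable_G0_snd: "integrable G0 (\<lambda>z. h (snd z))"
    and integral_G0_snd: "(\<integral>z. h (snd z) \<partial>G0) = (\<integral>x. h x \<partial>P0)"
  using assms(2) unfolding marg2[symmetric] by (simp_all add: integrable_distr_eq integral_distr)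

lemma integrable_P0_id: "integrable P0 (\<lambda>x. x)"
  by (rule P0.square_integrable_imp_integrable) (use P0_sq in auto)

lemma integrable_P0_centered_sq: "integrable P0 (\<lambda>x. (x - mean0)\<^sup>2)"
proof -
  have "(\<lambda>x. (x - mean0)\<^sup>2) = (\<lambda>x. x\<^sup>2 - 2 * mean0 * x + mean0\<^sup>2)"
    by (auto simp: power2_eq_square algebra_simps)
  then show ?thesis using P0_sq integrable_P0_id by auto
qed

lemma integrable_G0_mult_centered:
  assumes [measurable]: "h1 \<in> borel_measurable borel" "h2 \<in> borel_measurable borel"
    and "\<And>x. \<bar>h1 x\<bar> \<le> \<bar>x - mean0\<bar>" "\<And>x. \<bar>h2 x\<bar> \<le> \<bar>x - mean0\<bar>"
  shows "integrable G0 (\<lambda>z. h1 (fst z) * h2 (snd z))"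
proof (rule Bochner_Integration.integrable_bound)
  show "integrable G0 (\<lambda>z. (fst z - mean0)\<^sup>2 + (snd z - mean0)\<^sup>2)"
    using integrable_G0_fst[of "\<lambda>x. (x - mean0)\<^sup>2"] integrable_G0_snd[of "\<lambda>x. (x - mean0)\<^sup>2"]
      integrable_P0_centered_sq by simp
  have "\<bar>h1 (fst z) * h2 (snd z)\<bar> \<le> \<bar>fst z - mean0\<bar> * \<bar>snd z - mean0\<bar>" for z
    unfolding abs_mult by (intro mult_mono assms) auto
  also have "\<bar>u\<bar> * \<bar>v\<bar> \<le> u\<^sup>2 + v\<^sup>2" for u v :: real
    using sum_squares_bound[of "\<bar>u\<bar>" "\<bar>v\<bar>"] zero_le_mult_iff[of "\<bar>u\<bar>" "\<bar>v\<bar>"]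
    unfolding power2_abs by linarith
  finally show "AE z in G0. norm (h1 (fst z) * h2 (snd z)) \<le> norm ((fst z - mean0)\<^sup>2 + (snd z - mean0)\<^sup>2)"
    by simp
qed measurable

lemma integral_G0_centered_sq:
  "(\<integral>z. (fst z - mean0)\<^sup>2 \<partial>G0) = var0" "(\<integral>z. (snd z - mean0)\<^sup>2 \<partial>G0) = var0"
  using integral_G0_fst[OF _ integrable_P0_centered_sq] integral_G0_snd[OF _ integrable_P0_centered_sq]
  unfolding var0_def by simp_all

lemma correlation_G0: "correlation G0 fst snd = cov0 / var0"
  unfolding cov0_def
proof (rule correlation_eq_covariance_div)
  show "(\<integral>z. fst z \<partial>G0) = mean0" "(\<integral>z. snd z \<partial>G0) = mean0"
    using integral_G0_fst[OF _ integrable_P0_id] integral_G0_snd[OF _ integrable_P0_id]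
    unfolding mean0_def by simp_all
qed (fact integral_G0_centered_sq var0_pos)+

lemma abs_cov0_le_var0: "\<bar>cov0\<bar> \<le> var0"
proof -
  have "integrable G0 (\<lambda>z. (fst z - mean0)\<^sup>2)" "integrable G0 (\<lambda>z. (snd z - mean0)\<^sup>2)"
    using integrable_G0_fst[OF _ integrable_P0_centered_sq] integrable_G0_snd[OF _ integrable_P0_centered_sq]
    by simp_all
  moreover have "integrable G0 (\<lambda>z. (fst z - mean0) * (snd z - mean0))"
    by (rule integrable_G0_mult_centered) auto
  ultimately have "2 * \<bar>cov0\<bar> \<le> (\<integral>z. (fst z - mean0)\<^sup>2 \<partial>G0) + (\<integral>z. (snd z - mean0)\<^sup>2 \<partial>G0)"
    unfolding cov0_def by (rule abs_integral_mult_le_mean_squares)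
  then show ?thesis
    unfolding integral_G0_centered_sq by linarith
qed

lemma abs_correlation_G0_le_1: "\<bar>correlation G0 fst snd\<bar> \<le> 1"
  unfolding correlation_G0 abs_div_pos[OF var0_pos, symmetric] divide_le_eq_1_pos[OF var0_pos]
  by (rule abs_cov0_le_var0)

end

locale paired_random_measures = same_marginals_coupling G0 P0
  for G0 :: "(real \<times> real) measure" and P0 :: "real measure" +
  fixes M :: "'a measure"
    and J W th ph :: "nat \<Rightarrow> 'a \<Rightarrow> real"
    and X Y :: "'a \<Rightarrow> real"
  assumes prob_space_M: "prob_space M"
    and J_meas[measurable]: "\<And>k. J k \<in> borel_measurable M"
    and W_meas[measurable]: "\<And>k. W k \<in> borel_measurable M"
    and th_meas[measurable]: "\<And>k. th k \<in> borel_measurable M"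
    and ph_meas[measurable]: "\<And>k. ph k \<in> borel_measurable M"
    and J_nonneg: "\<And>k. AE \<omega> in M. J k \<omega> \<ge> 0"
    and W_nonneg: "\<And>k. AE \<omega> in M. W k \<omega> \<ge> 0"
    and J_sum: "AE \<omega> in M. (\<lambda>k. J k \<omega>) sums 1"
    and W_sum: "AE \<omega> in M. (\<lambda>k. W k \<omega>) sums 1"
    and JW_eqd: "\<And>k. distr M borel (J k) = distr M borel (W k)"
    and atoms_law: "\<And>k. distr M borel (\<lambda>\<omega>. (th k \<omega>, ph k \<omega>)) = G0"
    and atoms_indep: "prob_space.indep_vars M (\<lambda>_. borel) (\<lambda>k \<omega>. (th k \<omega>, ph k \<omega>)) UNIV"
    and weights_atoms_indep:
      "prob_space.indep_var M
         (Pi\<^sub>M UNIV (\<lambda>_. borel)) (\<lambda>\<omega> k. (J k \<omega>, W k \<omega>))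
         (Pi\<^sub>M UNIV (\<lambda>_. borel)) (\<lambda>\<omega> k. (th k \<omega>, ph k \<omega>))"
    and X_meas[measurable]: "X \<in> borel_measurable M"
    and Y_meas[measurable]: "Y \<in> borel_measurable M"
    and cond_law:
      "\<And>S B C. S \<in> sets (Pi\<^sub>M UNIV (\<lambda>_. borel :: (real \<times> real \<times> real \<times> real) measure)) \<Longrightarrow>
         B \<in> sets borel \<Longrightarrow> C \<in> sets borel \<Longrightarrow>
         measure M ({\<omega> \<in> space M. (\<lambda>k. (J k \<omega>, W k \<omega>, th k \<omega>, ph k \<omega>)) \<in> S
                                    \<and> X \<omega> \<in> B \<and> Y \<omega> \<in> C})
         = (\<integral>\<omega>. indicator {\<omega>. (\<lambda>k. (J k \<omega>, W k \<omega>, th k \<omega>, ph k \<omega>)) \<in> S} \<omega>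
                  * rand_meas (\<lambda>k. J k \<omega>) (\<lambda>k. th k \<omega>) B
                  * rand_meas (\<lambda>k. W k \<omega>) (\<lambda>k. ph k \<omega>) C \<partial>M)"
begin

sublocale prob_space M by (rule prob_space_M)

lemma AE_J_weights: "AE \<omega> in M. (\<forall>k. 0 \<le> J k \<omega>) \<and> (\<lambda>k. J k \<omega>) sums 1"
  using J_sum J_nonneg by (auto simp: AE_all_countable)

lemma AE_W_weights: "AE \<omega> in M. (\<forall>k. 0 \<le> W k \<omega>) \<and> (\<lambda>k. W k \<omega>) sums 1"
  using W_sum W_nonneg by (auto simp: AE_all_countable)

lemma AE_J_le_one: "AE \<omega> in M. \<forall>k. 0 \<le> J k \<omega> \<and> J k \<omega> \<le> 1"
  using AE_J_weights by eventually_elim (auto intro: nonneg_sums_one_le_one)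

lemma AE_W_le_one: "AE \<omega> in M. \<forall>k. 0 \<le> W k \<omega> \<and> W k \<omega> \<le> 1"
  using AE_W_weights by eventually_elim (auto intro: nonneg_sums_one_le_one)

definition p1_integral :: "(real \<Rightarrow> ennreal) \<Rightarrow> 'a \<Rightarrow> ennreal" where
  "p1_integral f \<omega> = (\<Sum>k. ennreal (J k \<omega>) * f (th k \<omega>))"

definition p2_integral :: "(real \<Rightarrow> ennreal) \<Rightarrow> 'a \<Rightarrow> ennreal" where
  "p2_integral f \<omega> = (\<Sum>k. ennreal (W k \<omega>) * f (ph k \<omega>))"

lemma p1_integral_measurable[measurable]:
  assumes [measurable]: "f \<in> borel_measurable borel"
  shows "p1_integral f \<in> borel_measurable M"
  unfolding p1_integral_def by measurable

lemma p2_integral_measurable[measurable]: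
  assumes [measurable]: "f \<in> borel_measurable borel"
  shows "p2_integral f \<in> borel_measurable M"
  unfolding p2_integral_def by measurable

lemma nn_integral_indicator_X_Y:
  assumes [measurable]: "B \<in> sets borel" "C \<in> sets borel"
  shows "(\<integral>\<^sup>+\<omega>. indicator B (X \<omega>) * indicator C (Y \<omega>) \<partial>M)
       = (\<integral>\<^sup>+\<omega>. p1_integral (indicator B) \<omega> * p2_integral (indicator C) \<omega> \<partial>M)"
proof -
  define R where "R \<omega> = rand_meas (\<lambda>k. J k \<omega>) (\<lambda>k. th k \<omega>) B * rand_meas (\<lambda>k. W k \<omega>) (\<lambda>k. ph k \<omega>) C"
    for \<omega>
  have [measurable]: "R \<in> borel_measurable M"
    unfolding R_def rand_meas_def by measurable
  have R_bounds: "AE \<omega> in M. 0 \<le> R \<omega> \<and> R \<omega> \<le> 1"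
    using AE_J_weights AE_W_weights
    by eventually_elim (auto simp: R_def rand_meas_nonneg rand_meas_le_one intro: mult_le_one)
  have "UNIV \<in> sets (Pi\<^sub>M UNIV (\<lambda>_. borel :: (real \<times> real \<times> real \<times> real) measure))"
    using sets.top[of "Pi\<^sub>M UNIV (\<lambda>_. borel :: (real \<times> real \<times> real \<times> real) measure)"]
    by (simp add: space_PiM)
  from cond_law[OF this assms]
  have prob: "measure M {\<omega> \<in> space M. X \<omega> \<in> B \<and> Y \<omega> \<in> C} = (\<integral>\<omega>. R \<omega> \<partial>M)"
    by (simp add: R_def)
  have "(\<integral>\<^sup>+\<omega>. indicator B (X \<omega>) * indicator C (Y \<omega>) \<partial>M)
      = (\<integral>\<^sup>+\<omega>. indicator {\<omega> \<in> space M. X \<omega> \<in> B \<and> Y \<omega> \<in> C} \<omega> \<partial>M)"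
    by (intro nn_integral_cong) (auto simp: indicator_def)
  also have "\<dots> = ennreal (\<integral>\<omega>. R \<omega> \<partial>M)"
    by (simp add: emeasure_eq_measure prob)
  also have "\<dots> = (\<integral>\<^sup>+\<omega>. ennreal (R \<omega>) \<partial>M)"
  proof (rule nn_integral_eq_integral[symmetric])
    show "integrable M R"
      by (rule integrable_const_bound[where B=1]) (use R_bounds in \<open>auto elim: AE_mp\<close>)
  qed (use R_bounds in \<open>auto elim: AE_mp\<close>)
  also have "\<dots> = (\<integral>\<^sup>+\<omega>. p1_integral (indicator B) \<omega> * p2_integral (indicator C) \<omega> \<partial>M)"
    using AE_J_weights AE_W_weights
    by (intro nn_integral_cong_AE, eventually_elim)
      (simp add: R_def p1_integral_def p2_integral_def ennreal_mult rand_meas_nonneg ennreal_rand_meas)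
  finally show ?thesis .
qed

lemma nn_integral_X_Y_eq_p1_p2:
  assumes [measurable]: "f \<in> borel_measurable borel" "g \<in> borel_measurable borel"
  shows "(\<integral>\<^sup>+\<omega>. f (X \<omega>) * g (Y \<omega>) \<partial>M) = (\<integral>\<^sup>+\<omega>. p1_integral f \<omega> * p2_integral g \<omega> \<partial>M)"
proof -
  have indicator_Y: "(\<integral>\<^sup>+\<omega>. indicator C (Y \<omega>) * f (X \<omega>) \<partial>M)
      = (\<integral>\<^sup>+\<omega>. p2_integral (indicator C) \<omega> * p1_integral f \<omega> \<partial>M)"
    if [measurable]: "C \<in> sets borel" for C
    unfolding p1_integral_def
    by (rule nn_integral_mixture_eq_of_indicators[where Z=X and \<psi>=th])
      (use nn_integral_indicator_X_Y[OF _ that] in \<open>simp_all add: p1_integral_def mult.commute\<close>)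
  show ?thesis
    unfolding p2_integral_def
    by (rule nn_integral_mixture_eq_of_indicators[where Z=Y and \<psi>=ph])
      (use indicator_Y in \<open>simp_all add: p2_integral_def mult.commute\<close>)
qed

lemma nn_integral_atom:
  assumes [measurable]: "h \<in> borel_measurable (borel :: (real \<times> real) measure)"
  shows "(\<integral>\<^sup>+\<omega>. h (th k \<omega>, ph k \<omega>) \<partial>M) = (\<integral>\<^sup>+z. h z \<partial>G0)"
  unfolding atoms_law[of k, symmetric] by (simp add: nn_integral_distr)

lemma nn_integral_distinct_atoms:
  assumes [measurable]: "f \<in> borel_measurable borel" "g \<in> borel_measurable borel" and "k \<noteq> l"
  shows "(\<integral>\<^sup>+\<omega>. f (th k \<omega>) * g (ph l \<omega>) \<partial>M) = (\<integral>\<^sup>+x. f x \<partial>P0) * (\<integral>\<^sup>+x. g x \<partial>P0)"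
proof -
  have "indep_var (Pi\<^sub>M {k} (\<lambda>_. borel)) (\<lambda>\<omega>. restrict (\<lambda>i. (th i \<omega>, ph i \<omega>)) {k})
                  (Pi\<^sub>M {l} (\<lambda>_. borel)) (\<lambda>\<omega>. restrict (\<lambda>i. (th i \<omega>, ph i \<omega>)) {l})"
    by (rule indep_var_restrict[OF atoms_indep]) (use \<open>k \<noteq> l\<close> in auto)
  then have "indep_var borel ((\<lambda>x. f (fst (x k))) \<circ> (\<lambda>\<omega>. restrict (\<lambda>i. (th i \<omega>, ph i \<omega>)) {k}))
                 borel ((\<lambda>x. g (snd (x l))) \<circ> (\<lambda>\<omega>. restrict (\<lambda>i. (th i \<omega>, ph i \<omega>)) {l}))"
    by (rule indep_var_compose) measurable
  then have "(\<integral>\<^sup>+\<omega>. f (th k \<omega>) * g (ph l \<omega>) \<partial>M) = (\<integral>\<^sup>+\<omega>. f (th k \<omega>) \<partial>M) * (\<integral>\<^sup>+\<omega>. g (ph l \<omega>) \<partial>M)"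
    by (intro indep_var_nn_integral) (simp add: comp_def)
  also have "\<dots> = (\<integral>\<^sup>+x. f x \<partial>P0) * (\<integral>\<^sup>+x. g x \<partial>P0)"
    using nn_integral_atom[of "\<lambda>z. f (fst z)" k] nn_integral_atom[of "\<lambda>z. g (snd z)" l]
    by (simp add: nn_integral_G0_fst nn_integral_G0_snd)
  finally show ?thesis .
qed

lemma nn_integral_weights_atoms:
  assumes [measurable]: "f \<in> borel_measurable borel" "g \<in> borel_measurable borel"
  shows "(\<integral>\<^sup>+\<omega>. (ennreal (J k \<omega>) * ennreal (W l \<omega>)) * (f (th k \<omega>) * g (ph l \<omega>)) \<partial>M)
     = (\<integral>\<^sup>+\<omega>. ennreal (J k \<omega>) * ennreal (W l \<omega>) \<partial>M) * (\<integral>\<^sup>+\<omega>. f (th k \<omega>) * g (ph l \<omega>) \<partial>M)"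
proof -
  have "indep_var borel ((\<lambda>x. ennreal (fst (x k)) * ennreal (snd (x l))) \<circ> (\<lambda>\<omega> k. (J k \<omega>, W k \<omega>)))
                 borel ((\<lambda>x. f (fst (x k)) * g (snd (x l))) \<circ> (\<lambda>\<omega> k. (th k \<omega>, ph k \<omega>)))"
    by (rule indep_var_compose[OF weights_atoms_indep]) measurable
  then show ?thesis
    by (intro indep_var_nn_integral) (simp add: comp_def)
qed

lemma nn_integral_p1_p2:
  assumes [measurable]: "f \<in> borel_measurable borel" "g \<in> borel_measurable borel"
  shows "(\<integral>\<^sup>+\<omega>. p1_integral f \<omega> * p2_integral g \<omega> \<partial>M)
    = (\<Sum>k. \<Sum>l. \<integral>\<^sup>+\<omega>. (ennreal (J k \<omega>) * ennreal (W l \<omega>)) * (f (th k \<omega>) * g (ph l \<omega>)) \<partial>M)"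
proof -
  have "p1_integral f \<omega> * p2_integral g \<omega>
      = (\<Sum>k. \<Sum>l. (ennreal (J k \<omega>) * ennreal (W l \<omega>)) * (f (th k \<omega>) * g (ph l \<omega>)))" for \<omega>
  proof -
    have "p1_integral f \<omega> * p2_integral g \<omega> = (\<Sum>k. ennreal (J k \<omega>) * f (th k \<omega>) * p2_integral g \<omega>)"
      unfolding p1_integral_def by (rule ennreal_suminf_multc[symmetric])
    also have "\<dots> = (\<Sum>k. \<Sum>l. (ennreal (J k \<omega>) * f (th k \<omega>)) * (ennreal (W l \<omega>) * g (ph l \<omega>)))"
      unfolding p2_integral_def by (intro suminf_cong) (rule ennreal_suminf_cmult[symmetric])
    finally show ?thesis by (simp add: ac_simps)
  qed
  then have "(\<integral>\<^sup>+\<omega>. p1_integral f \<omega> * p2_integral g \<omega> \<partial>M)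
      = (\<integral>\<^sup>+\<omega>. (\<Sum>k. \<Sum>l. (ennreal (J k \<omega>) * ennreal (W l \<omega>)) * (f (th k \<omega>) * g (ph l \<omega>))) \<partial>M)"
    by simp
  also have "\<dots> = (\<Sum>k. \<integral>\<^sup>+\<omega>. (\<Sum>l. (ennreal (J k \<omega>) * ennreal (W l \<omega>)) * (f (th k \<omega>) * g (ph l \<omega>))) \<partial>M)"
    by (rule nn_integral_suminf) measurable
  also have "\<dots> = (\<Sum>k. \<Sum>l. \<integral>\<^sup>+\<omega>. (ennreal (J k \<omega>) * ennreal (W l \<omega>)) * (f (th k \<omega>) * g (ph l \<omega>)) \<partial>M)"
    by (intro suminf_cong nn_integral_suminf) measurable
  finally show ?thesis .
qed

definition joint_weight :: "nat \<Rightarrow> nat \<Rightarrow> ennreal" where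
  "joint_weight k l = (\<integral>\<^sup>+\<omega>. ennreal (J k \<omega>) * ennreal (W l \<omega>) \<partial>M)"

lemma nn_integral_X_Y_double_sum:
  assumes [measurable]: "f \<in> borel_measurable borel" "g \<in> borel_measurable borel"
  shows "(\<integral>\<^sup>+\<omega>. f (X \<omega>) * g (Y \<omega>) \<partial>M) = (\<Sum>k. \<Sum>l. joint_weight k l *
     (if k = l then (\<integral>\<^sup>+z. f (fst z) * g (snd z) \<partial>G0) else (\<integral>\<^sup>+x. f x \<partial>P0) * (\<integral>\<^sup>+x. g x \<partial>P0)))"
proof -
  have "(\<lambda>z. f (fst z) * g (snd z)) \<in> borel_measurable borel" by measurable
  note diagonal = nn_integral_atom[OF this, simplified]
  show ?thesis
    unfolding nn_integral_X_Y_eq_p1_p2[OF assms] nn_integral_p1_p2[OF assms]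
      nn_integral_weights_atoms[OF assms] joint_weight_def
    by (intro suminf_cong) (auto simp: nn_integral_distinct_atoms diagonal)
qed

lemma joint_weight_total: "(\<Sum>k. \<Sum>l. joint_weight k l) = 1"
proof -
  let ?one = "\<lambda>_. 1 :: ennreal"
  have "(\<integral>\<^sup>+z. ?one (fst z) * ?one (snd z) \<partial>G0) = 1" "(\<integral>\<^sup>+x. ?one x \<partial>P0) = 1"
    "(\<integral>\<^sup>+\<omega>. ?one (X \<omega>) * ?one (Y \<omega>) \<partial>M) = 1"
    by (simp_all add: G0.emeasure_space_1 P0.emeasure_space_1 emeasure_space_1)
  with nn_integral_X_Y_double_sum[of ?one ?one] show ?thesis
    by (simp only: mult_1_right if_cancel) simp
qed

lemma nn_integral_X_Y:
  assumes [measurable]: "f \<in> borel_measurable borel" "g \<in> borel_measurable borel"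
  shows "(\<integral>\<^sup>+\<omega>. f (X \<omega>) * g (Y \<omega>) \<partial>M) + (\<Sum>k. joint_weight k k) * ((\<integral>\<^sup>+x. f x \<partial>P0) * (\<integral>\<^sup>+x. g x \<partial>P0))
    = (\<integral>\<^sup>+x. f x \<partial>P0) * (\<integral>\<^sup>+x. g x \<partial>P0) + (\<Sum>k. joint_weight k k) * (\<integral>\<^sup>+z. f (fst z) * g (snd z) \<partial>G0)"
  unfolding nn_integral_X_Y_double_sum[OF assms] ennreal_suminf_diagonal_split joint_weight_total
  by simp

lemma integrable_J_W: "integrable M (\<lambda>\<omega>. J k \<omega> * W l \<omega>)"
  by (rule integrable_const_bound[where B=1])
    (use AE_J_le_one AE_W_le_one in \<open>eventually_elim, auto simp: abs_mult intro: mult_le_one\<close>)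

lemma integral_J_W_nonneg: "0 \<le> (\<integral>\<omega>. J k \<omega> * W l \<omega> \<partial>M)"
  by (rule integral_nonneg_AE) (use AE_J_le_one AE_W_le_one in \<open>eventually_elim, auto\<close>)

lemma joint_weight_eq_integral: "joint_weight k l = ennreal (\<integral>\<omega>. J k \<omega> * W l \<omega> \<partial>M)"
proof -
  have "joint_weight k l = (\<integral>\<^sup>+\<omega>. ennreal (J k \<omega> * W l \<omega>) \<partial>M)"
    unfolding joint_weight_def
    by (rule nn_integral_cong_AE) (use AE_J_le_one AE_W_le_one in \<open>eventually_elim, auto simp: ennreal_mult\<close>)
  also have "\<dots> = ennreal (\<integral>\<omega>. J k \<omega> * W l \<omega> \<partial>M)"
    by (rule nn_integral_eq_integral[OF integrable_J_W])
      (use AE_J_le_one AE_W_le_one in \<open>eventually_elim, auto\<close>)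
  finally show ?thesis .
qed

definition same_atom_prob :: real where
  "same_atom_prob = (\<Sum>k. \<integral>\<omega>. J k \<omega> * W k \<omega> \<partial>M)"

lemma summable_same_atom_prob: "summable (\<lambda>k. \<integral>\<omega>. J k \<omega> * W k \<omega> \<partial>M)"
  and diagonal_joint_weight: "(\<Sum>k. joint_weight k k) = ennreal same_atom_prob"
proof -
  have "(\<Sum>k. joint_weight k k) \<le> (\<Sum>k. \<Sum>l. joint_weight k l)"
    by (intro suminf_le) (auto intro: order_trans[OF _ sum_le_suminf[of _ "{k}" for k]])
  then have "(\<Sum>k. joint_weight k k) \<le> 1"
    unfolding joint_weight_total .
  then have finite: "(\<Sum>k. ennreal (\<integral>\<omega>. J k \<omega> * W k \<omega> \<partial>M)) \<noteq> top"
    unfolding joint_weight_eq_integral by (auto simp: top_unique)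
  show "summable (\<lambda>k. \<integral>\<omega>. J k \<omega> * W k \<omega> \<partial>M)"
    by (rule summable_suminf_not_top[OF integral_J_W_nonneg finite])
  show "(\<Sum>k. joint_weight k k) = ennreal same_atom_prob"
    unfolding joint_weight_eq_integral same_atom_prob_def
    using finite integral_J_W_nonneg by (simp add: suminf_ennreal)
qed

lemma same_atom_prob_nonneg: "0 \<le> same_atom_prob"
  unfolding same_atom_prob_def by (rule suminf_nonneg[OF summable_same_atom_prob integral_J_W_nonneg])

lemma integral_X_Y_nonneg:
  fixes h1 h2 :: "real \<Rightarrow> real"
  assumes [measurable]: "h1 \<in> borel_measurable borel" "h2 \<in> borel_measurable borel"
    and nonneg: "\<And>x. 0 \<le> h1 x" "\<And>x. 0 \<le> h2 x"
    and "integrable P0 h1" "integrable P0 h2" "integrable G0 (\<lambda>z. h1 (fst z) * h2 (snd z))"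
  shows "integrable M (\<lambda>\<omega>. h1 (X \<omega>) * h2 (Y \<omega>))"
    "(\<integral>\<omega>. h1 (X \<omega>) * h2 (Y \<omega>) \<partial>M) = (1 - same_atom_prob) * ((\<integral>x. h1 x \<partial>P0) * (\<integral>x. h2 x \<partial>P0))
       + same_atom_prob * (\<integral>z. h1 (fst z) * h2 (snd z) \<partial>G0)"
proof -
  let ?a = "\<integral>x. h1 x \<partial>P0" and ?b = "\<integral>x. h2 x \<partial>P0" and ?d = "\<integral>z. h1 (fst z) * h2 (snd z) \<partial>G0"
  have a: "(\<integral>\<^sup>+x. ennreal (h1 x) \<partial>P0) = ennreal ?a" and b: "(\<integral>\<^sup>+x. ennreal (h2 x) \<partial>P0) = ennreal ?b"
    and d: "(\<integral>\<^sup>+z. ennreal (h1 (fst z)) * ennreal (h2 (snd z)) \<partial>G0) = ennreal ?d"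
    using assms by (simp_all add: nn_integral_eq_integral ennreal_mult[symmetric])
  have nonneg_integrals: "0 \<le> ?a" "0 \<le> ?b" "0 \<le> ?d"
    using nonneg by (simp_all add: integral_nonneg)
  have "(\<integral>\<^sup>+\<omega>. ennreal (h1 (X \<omega>) * h2 (Y \<omega>)) \<partial>M) + ennreal (same_atom_prob * (?a * ?b))
      = ennreal (?a * ?b + same_atom_prob * ?d)"
    using nn_integral_X_Y[of "\<lambda>x. ennreal (h1 x)" "\<lambda>x. ennreal (h2 x)"] nonneg nonneg_integrals
      same_atom_prob_nonneg
    unfolding a b d diagonal_joint_weight by (simp add: ennreal_mult ennreal_plus)
  from integral_eq_of_nn_integral_add[OF _ _ _ _ this]
  show "integrable M (\<lambda>\<omega>. h1 (X \<omega>) * h2 (Y \<omega>))"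
    "(\<integral>\<omega>. h1 (X \<omega>) * h2 (Y \<omega>) \<partial>M) = (1 - same_atom_prob) * (?a * ?b) + same_atom_prob * ?d"
    using nonneg nonneg_integrals same_atom_prob_nonneg by (auto simp: algebra_simps)
qed

lemma integral_X_Y:
  fixes h1 h2 :: "real \<Rightarrow> real"
  assumes [measurable]: "h1 \<in> borel_measurable borel" "h2 \<in> borel_measurable borel"
    and "integrable P0 h1" "integrable P0 h2" "integrable G0 (\<lambda>z. h1 (fst z) * h2 (snd z))"
  shows "integrable M (\<lambda>\<omega>. h1 (X \<omega>) * h2 (Y \<omega>))"
    "(\<integral>\<omega>. h1 (X \<omega>) * h2 (Y \<omega>) \<partial>M) = (1 - same_atom_prob) * ((\<integral>x. h1 x \<partial>P0) * (\<integral>x. h2 x \<partial>P0))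
       + same_atom_prob * (\<integral>z. h1 (fst z) * h2 (snd z) \<partial>G0)"
proof -
  define pos neg :: "(real \<Rightarrow> real) \<Rightarrow> real \<Rightarrow> real"
    where "pos h x = max (h x) 0" and "neg h x = max (- h x) 0" for h x
  have split: "h x = pos h x - neg h x" for h x
    by (simp add: pos_def neg_def max_def)
  have parts_measurable: "pos h \<in> borel_measurable borel" "neg h \<in> borel_measurable borel"
    if [measurable]: "h \<in> borel_measurable borel" for h
    unfolding pos_def[abs_def] neg_def[abs_def] by measurable
  have parts_integrable: "integrable P0 (pos h)" "integrable P0 (neg h)" if "integrable P0 h" for h
    unfolding pos_def[abs_def] neg_def[abs_def] using that by auto
  have integral_parts: "(\<integral>x. h x \<partial>P0) = (\<integral>x. pos h x \<partial>P0) - (\<integral>x. neg h x \<partial>P0)"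
    if "integrable P0 h" for h
    using parts_integrable[OF that] by (simp add: split[of h])
  have parts:
    "integrable G0 (\<lambda>z. s1 h1 (fst z) * s2 h2 (snd z)) \<and> integrable M (\<lambda>\<omega>. s1 h1 (X \<omega>) * s2 h2 (Y \<omega>)) \<and>
     (\<integral>\<omega>. s1 h1 (X \<omega>) * s2 h2 (Y \<omega>) \<partial>M) = (1 - same_atom_prob) * ((\<integral>x. s1 h1 x \<partial>P0) * (\<integral>x. s2 h2 x \<partial>P0))
       + same_atom_prob * (\<integral>z. s1 h1 (fst z) * s2 h2 (snd z) \<partial>G0)"
    if "s1 \<in> {pos, neg}" "s2 \<in> {pos, neg}" for s1 s2
  proof -
    have [measurable]: "s1 h1 \<in> borel_measurable borel" "s2 h2 \<in> borel_measurable borel"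
      using that parts_measurable assms(1,2) by auto
    have "integrable P0 (s1 h1)" "integrable P0 (s2 h2)"
      using parts_integrable assms(3,4) that by auto
    moreover have "\<bar>s1 h1 x\<bar> \<le> \<bar>h1 x\<bar>" "\<bar>s2 h2 y\<bar> \<le> \<bar>h2 y\<bar>" for x y
      using that by (auto simp: pos_def neg_def)
    then have "integrable G0 (\<lambda>z. s1 h1 (fst z) * s2 h2 (snd z))"
      by (intro Bochner_Integration.integrable_bound[OF assms(5)]) (auto simp: abs_mult intro!: AE_I2 mult_mono)
    moreover have "0 \<le> s1 h1 x" "0 \<le> s2 h2 y" for x y
      using that by (auto simp: pos_def neg_def)
    ultimately show ?thesis
      using integral_X_Y_nonneg[of "s1 h1" "s2 h2"] by simp
  qed
  note pos_neg = insertI1 insertI2[OF singletonI]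
  note pp = parts[OF pos_neg(1) pos_neg(1)] and pn = parts[OF pos_neg(1) pos_neg(2)]
    and np = parts[OF pos_neg(2) pos_neg(1)] and nn = parts[OF pos_neg(2) pos_neg(2)]
  have expand: "h1 u * h2 v = pos h1 u * pos h2 v - pos h1 u * neg h2 v - neg h1 u * pos h2 v
      + neg h1 u * neg h2 v" for u v
    by (subst split[of h1], subst split[of h2]) (simp add: algebra_simps)
  show "integrable M (\<lambda>\<omega>. h1 (X \<omega>) * h2 (Y \<omega>))"
    unfolding expand using pp pn np nn by simp
  show "(\<integral>\<omega>. h1 (X \<omega>) * h2 (Y \<omega>) \<partial>M) = (1 - same_atom_prob) * ((\<integral>x. h1 x \<partial>P0) * (\<integral>x. h2 x \<partial>P0))
       + same_atom_prob * (\<integral>z. h1 (fst z) * h2 (snd z) \<partial>G0)"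
    unfolding expand integral_parts[OF assms(3)] integral_parts[OF assms(4)]
    using pp pn np nn by (simp add: algebra_simps)
qed

lemma integral_X:
  fixes h :: "real \<Rightarrow> real"
  assumes [measurable]: "h \<in> borel_measurable borel" and h: "integrable P0 h"
  shows "(\<integral>\<omega>. h (X \<omega>) \<partial>M) = (\<integral>x. h x \<partial>P0)"
proof -
  have "integrable G0 (\<lambda>z. h (fst z) * 1)"
    using integrable_G0_fst[OF assms] by simp
  from integral_X_Y(2)[of h "\<lambda>_. 1", OF assms(1) borel_measurable_const h P0.integrable_const this]
  show ?thesis
    using integral_G0_fst[OF assms] by (simp add: P0.prob_space left_diff_distrib)
qed

lemma integral_Y:
  fixes h :: "real \<Rightarrow> real"
  assumes [measurable]: "h \<in> borel_measurable borel" and h: "integrable P0 h"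
  shows "(\<integral>\<omega>. h (Y \<omega>) \<partial>M) = (\<integral>x. h x \<partial>P0)"
proof -
  have "integrable G0 (\<lambda>z. 1 * h (snd z))"
    using integrable_G0_snd[OF assms] by simp
  from integral_X_Y(2)[of "\<lambda>_. 1" h, OF borel_measurable_const assms(1) P0.integrable_const h this]
  show ?thesis
    using integral_G0_snd[OF assms] by (simp add: P0.prob_space left_diff_distrib)
qed

lemma correlation_X_Y: "correlation M X Y = same_atom_prob * correlation G0 fst snd"
proof -
  have id: "(\<lambda>x. x) \<in> borel_measurable borel"
    and centered_meas: "(\<lambda>x. x - mean0) \<in> borel_measurable borel"
    and centered_sq: "(\<lambda>x. (x - mean0)\<^sup>2) \<in> borel_measurable borel"
    by measurable
  have centered: "integrable P0 (\<lambda>x. x - mean0)"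
    using integrable_P0_id by simp
  have "integrable G0 (\<lambda>z. (fst z - mean0) * (snd z - mean0))"
    by (rule integrable_G0_mult_centered) auto
  note XY = integral_X_Y(2)[OF centered_meas centered_meas centered centered this]
  have "(\<integral>x. x - mean0 \<partial>P0) = 0"
    using integrable_P0_id unfolding mean0_def by (simp add: P0.prob_space)
  then have "(\<integral>\<omega>. (X \<omega> - mean0) * (Y \<omega> - mean0) \<partial>M) = same_atom_prob * cov0"
    unfolding XY cov0_def by simp
  moreover have "correlation M X Y = (\<integral>\<omega>. (X \<omega> - mean0) * (Y \<omega> - mean0) \<partial>M) / var0"
  proof (rule correlation_eq_covariance_div)
    show "(\<integral>\<omega>. X \<omega> \<partial>M) = mean0" "(\<integral>\<omega>. Y \<omega> \<partial>M) = mean0"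
      unfolding integral_X[OF id integrable_P0_id] integral_Y[OF id integrable_P0_id] mean0_def
      by simp_all
    show "(\<integral>\<omega>. (X \<omega> - mean0)\<^sup>2 \<partial>M) = var0" "(\<integral>\<omega>. (Y \<omega> - mean0)\<^sup>2 \<partial>M) = var0"
      unfolding integral_X[OF centered_sq integrable_P0_centered_sq]
        integral_Y[OF centered_sq integrable_P0_centered_sq] var0_def
      by simp_all
  qed (fact var0_pos)
  ultimately show ?thesis
    by (simp add: correlation_G0)
qed

lemma integrable_J_sq: "integrable M (\<lambda>\<omega>. (J k \<omega>)\<^sup>2)"
  by (rule integrable_const_bound[where B=1])
    (use AE_J_le_one in \<open>eventually_elim, auto simp: power_le_one\<close>)

lemma integrable_W_sq: "integrable M (\<lambda>\<omega>. (W k \<omega>)\<^sup>2)"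
  by (rule integrable_const_bound[where B=1])
    (use AE_W_le_one in \<open>eventually_elim, auto simp: power_le_one\<close>)

lemma integral_W_sq: "(\<integral>\<omega>. (W k \<omega>)\<^sup>2 \<partial>M) = (\<integral>\<omega>. (J k \<omega>)\<^sup>2 \<partial>M)"
proof -
  have "(\<integral>\<omega>. (W k \<omega>)\<^sup>2 \<partial>M) = (\<integral>x. x\<^sup>2 \<partial>distr M borel (W k))"
    by (simp add: integral_distr)
  also have "\<dots> = (\<integral>\<omega>. (J k \<omega>)\<^sup>2 \<partial>M)"
    unfolding JW_eqd[symmetric] by (simp add: integral_distr)
  finally show ?thesis .
qed

lemma
  shows integral_J_W_le_J_sq: "(\<integral>\<omega>. J k \<omega> * W k \<omega> \<partial>M) \<le> (\<integral>\<omega>. (J k \<omega>)\<^sup>2 \<partial>M)"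
    and integral_J_W_eq_J_sq_iff:
      "(\<integral>\<omega>. J k \<omega> * W k \<omega> \<partial>M) = (\<integral>\<omega>. (J k \<omega>)\<^sup>2 \<partial>M) \<longleftrightarrow> (AE \<omega> in M. J k \<omega> = W k \<omega>)"
  using integral_mult_le_square_of_eq_squares[OF integrable_J_sq integrable_W_sq integrable_J_W integral_W_sq]
  by auto

lemma summable_integral_J_sq: "summable (\<lambda>k. \<integral>\<omega>. (J k \<omega>)\<^sup>2 \<partial>M)"
proof -
  have "(\<Sum>k. ennreal (\<integral>\<omega>. (J k \<omega>)\<^sup>2 \<partial>M)) = (\<Sum>k. \<integral>\<^sup>+\<omega>. ennreal ((J k \<omega>)\<^sup>2) \<partial>M)"
    by (intro suminf_cong nn_integral_eq_integral[OF integrable_J_sq, symmetric]) auto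
  also have "\<dots> \<le> (\<Sum>k. \<integral>\<^sup>+\<omega>. ennreal (J k \<omega>) \<partial>M)"
    by (intro suminf_le nn_integral_mono_AE)
      (use AE_J_le_one in \<open>eventually_elim, auto simp: power2_eq_square intro!: mult_left_le\<close>)
  also have "\<dots> = (\<integral>\<^sup>+\<omega>. (\<Sum>k. ennreal (J k \<omega>)) \<partial>M)"
    by (rule nn_integral_suminf[symmetric]) measurable
  also have "\<dots> = (\<integral>\<^sup>+\<omega>. 1 \<partial>M)"
    by (rule nn_integral_cong_AE)
      (use AE_J_weights in \<open>eventually_elim, auto simp: suminf_ennreal_eq sums_iff\<close>)
  also have "\<dots> < \<infinity>"
    using emeasure_space_1 by simp
  finally show ?thesis
    by (intro summable_suminf_not_top) auto
qed

definition beta :: real where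
  "beta = (\<Sum>k. \<integral>\<omega>. (J k \<omega>)\<^sup>2 \<partial>M)"

lemma same_atom_prob_le_beta: "same_atom_prob \<le> beta"
  unfolding same_atom_prob_def beta_def
  by (rule suminf_le[OF integral_J_W_le_J_sq summable_same_atom_prob summable_integral_J_sq])

lemma same_atom_prob_eq_beta_iff: "same_atom_prob = beta \<longleftrightarrow> (\<forall>k. AE \<omega> in M. W k \<omega> = J k \<omega>)"
  unfolding same_atom_prob_def beta_def
    suminf_eq_suminf_iff_of_le[OF summable_same_atom_prob summable_integral_J_sq integral_J_W_le_J_sq]
    integral_J_W_eq_J_sq_iff
  by (simp add: eq_commute)

lemma beta_pos: "0 < beta"
proof (rule ccontr)
  assume "\<not> 0 < beta"
  moreover have "0 \<le> beta"
    unfolding beta_def by (rule suminf_nonneg[OF summable_integral_J_sq]) simp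
  ultimately have "\<forall>k. (\<integral>\<omega>. (J k \<omega>)\<^sup>2 \<partial>M) = 0"
    unfolding beta_def by (simp add: suminf_eq_zero_iff[OF summable_integral_J_sq])
  then have "\<forall>k. AE \<omega> in M. J k \<omega> = 0"
    by (simp add: integral_nonneg_eq_0_iff_AE[OF integrable_J_sq])
  then have "AE \<omega> in M. \<forall>k. J k \<omega> = 0"
    by (simp add: AE_all_countable)
  with AE_J_weights have "AE \<omega> in M. False"
    by eventually_elim (auto simp: sums_iff)
  then show False
    by simp
qed

end

theorem corollary1:
  fixes M :: "'a measure"
    and G0 :: "(real \<times> real) measure" and P0 :: "real measure"
    and J W th ph :: "nat \<Rightarrow> 'a \<Rightarrow> real"
    and X Y :: "'a \<Rightarrow> real"
  assumes M: "prob_space M"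
    and G0: "prob_space G0" "sets G0 = sets borel"
    and marg1: "distr G0 borel fst = P0" and marg2: "distr G0 borel snd = P0"
    and P0_sq: "integrable P0 (\<lambda>x. x\<^sup>2)"
    and P0_var: "(\<integral>x. (x - (\<integral>y. y \<partial>P0))\<^sup>2 \<partial>P0) > 0"
    and J_meas: "\<And>k. J k \<in> borel_measurable M"
    and W_meas: "\<And>k. W k \<in> borel_measurable M"
    and th_meas: "\<And>k. th k \<in> borel_measurable M"
    and ph_meas: "\<And>k. ph k \<in> borel_measurable M"
    and J_nonneg: "\<And>k. AE \<omega> in M. J k \<omega> \<ge> 0"
    and W_nonneg: "\<And>k. AE \<omega> in M. W k \<omega> \<ge> 0"
    and J_sum: "AE \<omega> in M. (\<lambda>k. J k \<omega>) sums 1"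
    and W_sum: "AE \<omega> in M. (\<lambda>k. W k \<omega>) sums 1"
    and JW_eqd: "\<And>k. distr M borel (J k) = distr M borel (W k)"
    and atoms_law: "\<And>k. distr M borel (\<lambda>\<omega>. (th k \<omega>, ph k \<omega>)) = G0"
    and atoms_indep: "prob_space.indep_vars M (\<lambda>_. borel) (\<lambda>k \<omega>. (th k \<omega>, ph k \<omega>)) UNIV"
    and weights_atoms_indep:
      "prob_space.indep_var M
         (Pi\<^sub>M UNIV (\<lambda>_. borel)) (\<lambda>\<omega> k. (J k \<omega>, W k \<omega>))
         (Pi\<^sub>M UNIV (\<lambda>_. borel)) (\<lambda>\<omega> k. (th k \<omega>, ph k \<omega>))"
    and X_meas: "X \<in> borel_measurable M" and Y_meas: "Y \<in> borel_measurable M"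
    and cond_law:
      "\<And>S B C. S \<in> sets (Pi\<^sub>M UNIV (\<lambda>_. borel :: (real \<times> real \<times> real \<times> real) measure)) \<Longrightarrow>
         B \<in> sets borel \<Longrightarrow> C \<in> sets borel \<Longrightarrow>
         measure M ({\<omega> \<in> space M. (\<lambda>k. (J k \<omega>, W k \<omega>, th k \<omega>, ph k \<omega>)) \<in> S
                                    \<and> X \<omega> \<in> B \<and> Y \<omega> \<in> C})
         = (\<integral>\<omega>. indicator {\<omega>. (\<lambda>k. (J k \<omega>, W k \<omega>, th k \<omega>, ph k \<omega>)) \<in> S} \<omega>
                  * rand_meas (\<lambda>k. J k \<omega>) (\<lambda>k. th k \<omega>) B
                  * rand_meas (\<lambda>k. W k \<omega>) (\<lambda>k. ph k \<omega>) C \<partial>M)"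
  defines "\<rho>0 \<equiv> correlation G0 fst snd"
    and "\<beta> \<equiv> (\<Sum>k. \<integral>\<omega>. (J k \<omega>)\<^sup>2 \<partial>M)"
  shows "correlation M X Y \<in> {-\<beta>..\<beta>}
    \<and> (correlation M X Y = \<beta> \<longleftrightarrow> (\<forall>k. AE \<omega> in M. W k \<omega> = J k \<omega>) \<and> \<rho>0 = 1)
    \<and> (correlation M X Y = -\<beta> \<longleftrightarrow> (\<forall>k. AE \<omega> in M. W k \<omega> = J k \<omega>) \<and> \<rho>0 = -1)"
proof -
  interpret paired_random_measures G0 P0 M J W th ph X Y
    by (intro paired_random_measures.intro same_marginals_coupling.intro paired_random_measures_axioms.intro)
      (fact assms)+
  have "\<beta> = beta"
    unfolding \<beta>_def beta_def ..
  show ?thesis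
    unfolding \<rho>0_def \<open>\<beta> = beta\<close> correlation_X_Y same_atom_prob_eq_beta_iff[symmetric]
    by (rule mult_in_interval_and_extremes[OF same_atom_prob_nonneg same_atom_prob_le_beta beta_pos
          abs_correlation_G0_le_1])
qed

end
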